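(* Let $G$ be an almost well-covered graph of girth at least $6$. Then no vertex of $G_2$ is adjacent to a vertex of $G_0$.
   Context: All graphs are finite and simple. The girth is the length of a shortest cycle (infinite for acyclic graphs). For a graph $G$, $\alpha(G)$ is the maximum size of an independent set and $i(G)$ the minimum size of an inclusion-maximal independent set; $G$ is almost well-covered if $\alpha(G)-i(G)=1$. Types of vertices: let $U$ be the set of vertices of $G$ whose connected component is a complete graph. In $G-U$, vertices of degree $1$ are leaves and the others are internal vertices. An internal vertex adjacent to exactly $k$ leaves is of type $k$; every vertex of $U$ is of type $0$. $G_i$ denotes the subgraph of $G$ induced by all vertices of type $i$. *)

theory Defs
  imports Main
begin

definition simple_graph :: "'a set \<Rightarrow> ('a \<Rightarrow> 'a \<Rightarrow> bool) \<Rightarrow> bool" where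
  "simple_graph V E \<longleftrightarrow> finite V \<and> (\<forall>x y. E x y \<longrightarrow> x \<in> V \<and> y \<in> V)
     \<and> (\<forall>x y. E x y \<longrightarrow> E y x) \<and> (\<forall>x. \<not> E x x)"

definition is_cycle :: "'a set \<Rightarrow> ('a \<Rightarrow> 'a \<Rightarrow> bool) \<Rightarrow> 'a list \<Rightarrow> bool" where
  "is_cycle V E cs \<longleftrightarrow> length cs \<ge> 3 \<and> distinct cs \<and> set cs \<subseteq> V
     \<and> (\<forall>i < length cs. E (cs ! i) (cs ! ((i + 1) mod length cs)))"

text \<open>Girth at least g (vacuous for acyclic graphs, whose girth is infinite).\<close>
definition girth_at_least :: "'a set \<Rightarrow> ('a \<Rightarrow> 'a \<Rightarrow> bool) \<Rightarrow> nat \<Rightarrow> bool" where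
  "girth_at_least V E g \<longleftrightarrow> (\<forall>cs. is_cycle V E cs \<longrightarrow> length cs \<ge> g)"

definition indep_set :: "'a set \<Rightarrow> ('a \<Rightarrow> 'a \<Rightarrow> bool) \<Rightarrow> 'a set \<Rightarrow> bool" where
  "indep_set V E S \<longleftrightarrow> S \<subseteq> V \<and> (\<forall>x\<in>S. \<forall>y\<in>S. \<not> E x y)"

definition maximal_indep_set :: "'a set \<Rightarrow> ('a \<Rightarrow> 'a \<Rightarrow> bool) \<Rightarrow> 'a set \<Rightarrow> bool" where
  "maximal_indep_set V E S \<longleftrightarrow> indep_set V E S \<and> (\<forall>T. indep_set V E T \<and> S \<subseteq> T \<longrightarrow> T = S)"

definition alpha :: "'a set \<Rightarrow> ('a \<Rightarrow> 'a \<Rightarrow> bool) \<Rightarrow> nat" where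
  "alpha V E = Max (card ` {S. indep_set V E S})"

definition indep_domination_number :: "'a set \<Rightarrow> ('a \<Rightarrow> 'a \<Rightarrow> bool) \<Rightarrow> nat" where
  "indep_domination_number V E = Min (card ` {S. maximal_indep_set V E S})"

definition almost_well_covered :: "'a set \<Rightarrow> ('a \<Rightarrow> 'a \<Rightarrow> bool) \<Rightarrow> bool" where
  "almost_well_covered V E \<longleftrightarrow> int (alpha V E) - int (indep_domination_number V E) = 1"

definition component :: "'a set \<Rightarrow> ('a \<Rightarrow> 'a \<Rightarrow> bool) \<Rightarrow> 'a \<Rightarrow> 'a set" where
  "component V E v = {u \<in> V. E\<^sup>*\<^sup>* v u}"

definition Uset :: "'a set \<Rightarrow> ('a \<Rightarrow> 'a \<Rightarrow> bool) \<Rightarrow> 'a set" where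
  "Uset V E = {v \<in> V. \<forall>x\<in>component V E v. \<forall>y\<in>component V E v. x \<noteq> y \<longrightarrow> E x y}"

definition deg_minus_U :: "'a set \<Rightarrow> ('a \<Rightarrow> 'a \<Rightarrow> bool) \<Rightarrow> 'a \<Rightarrow> nat" where
  "deg_minus_U V E v = card {u \<in> V - Uset V E. E v u}"

definition is_leaf :: "'a set \<Rightarrow> ('a \<Rightarrow> 'a \<Rightarrow> bool) \<Rightarrow> 'a \<Rightarrow> bool" where
  "is_leaf V E v \<longleftrightarrow> v \<in> V - Uset V E \<and> deg_minus_U V E v = 1"

definition is_internal :: "'a set \<Rightarrow> ('a \<Rightarrow> 'a \<Rightarrow> bool) \<Rightarrow> 'a \<Rightarrow> bool" where
  "is_internal V E v \<longleftrightarrow> v \<in> V - Uset V E \<and> deg_minus_U V E v \<noteq> 1"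

definition has_type :: "'a set \<Rightarrow> ('a \<Rightarrow> 'a \<Rightarrow> bool) \<Rightarrow> nat \<Rightarrow> 'a \<Rightarrow> bool" where
  "has_type V E k v \<longleftrightarrow> (v \<in> Uset V E \<and> k = 0)
     \<or> (is_internal V E v \<and> card {u. is_leaf V E u \<and> E v u} = k)"

end

theory Submission
  imports Defs
begin

text \<open>Suppose a vertex v of type 2, with leaves a and b, were adjacent to a vertex u of type 0.
  As u has no leaf neighbour, every neighbour w \<noteq> v of u has a neighbour x \<noteq> u. Girth at least 6
  makes the vertices at distance two from u independent and rules out the square u w x v, so v
  together with the second neighbours of u that are not adjacent to v extends to a maximal
  independent set M meeting the neighbourhood of u only in v. Exchanging v for a, b and u turns M
  into an independent set two larger, whence \<open>\<alpha>(G) - i(G) \<ge> 2\<close>.\<close>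

lemma
  assumes "simple_graph V E"
  shows simple_graph_finite: "finite V"
    and simple_graph_edge_in_V: "E x y \<Longrightarrow> x \<in> V \<and> y \<in> V"
    and simple_graph_sym: "E x y \<Longrightarrow> E y x"
    and simple_graph_irrefl: "\<not> E x x"
  using assms unfolding simple_graph_def by blast+

lemma successively_nth:
  assumes "successively P xs" "Suc i < length xs"
  shows "P (xs ! i) (xs ! Suc i)"
  using assms by (induction P xs arbitrary: i rule: successively.induct) (auto simp: less_Suc_eq_0_disj)

lemma is_cycleI:
  assumes "3 \<le> length cs" "distinct cs" "set cs \<subseteq> V"
    and "successively E cs" "E (last cs) (hd cs)"
  shows "is_cycle V E cs"
  unfolding is_cycle_def
proof (intro conjI allI impI)
  fix i assume i: "i < length cs"
  show "E (cs ! i) (cs ! ((i + 1) mod length cs))"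
  proof (cases "Suc i < length cs")
    case True
    then show ?thesis using successively_nth[OF assms(4)] by simp
  next
    case False
    with i have "i = length cs - 1" by simp
    moreover have "cs \<noteq> []" using assms(1) by auto
    ultimately show ?thesis using assms(5) by (simp add: last_conv_nth hd_conv_nth)
  qed
qed (use assms in auto)

lemma girth_at_least_mono:
  "girth_at_least V E h \<Longrightarrow> g \<le> h \<Longrightarrow> girth_at_least V E g"
  unfolding girth_at_least_def by fastforce

lemma girth_at_least_4_no_triangle:
  assumes "simple_graph V E" "girth_at_least V E 4" "E a b" "E b c"
  shows "\<not> E c a"
proof
  assume "E c a"
  with assms have "is_cycle V E [a, b, c]"
    by (intro is_cycleI) (auto dest: simple_graph_edge_in_V simp: simple_graph_irrefl)
  with assms(2) show False unfolding girth_at_least_def by fastforce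
qed

lemma girth_at_least_5_no_square:
  assumes "simple_graph V E" "girth_at_least V E 5" "E a b" "E b c" "E c d" "a \<noteq> c" "b \<noteq> d"
  shows "\<not> E d a"
proof
  assume "E d a"
  with assms have "is_cycle V E [a, b, c, d]"
    by (intro is_cycleI) (auto dest: simple_graph_edge_in_V simp: simple_graph_irrefl)
  with assms(2) show False unfolding girth_at_least_def by fastforce
qed

lemma girth_at_least_6_no_pentagon:
  assumes "simple_graph V E" "girth_at_least V E 6" "E a b" "E b c" "E c d" "E d e"
    and "a \<noteq> c" "a \<noteq> d" "b \<noteq> d" "b \<noteq> e" "c \<noteq> e"
  shows "\<not> E e a"
proof
  assume "E e a"
  with assms have "is_cycle V E [a, b, c, d, e]"
    by (intro is_cycleI) (auto dest: simple_graph_edge_in_V simp: simple_graph_irrefl)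
  with assms(2) show False unfolding girth_at_least_def by fastforce
qed

definition second_neighbours :: "('a \<Rightarrow> 'a \<Rightarrow> bool) \<Rightarrow> 'a \<Rightarrow> 'a set" where
  "second_neighbours E u = {x. x \<noteq> u \<and> (\<exists>w. E u w \<and> E w x)}"

lemma second_neighbours_indep:
  assumes sg: "simple_graph V E" and girth: "girth_at_least V E 6"
  shows "indep_set V E (second_neighbours E u)"
  unfolding indep_set_def
proof (intro conjI ballI)
  show "second_neighbours E u \<subseteq> V"
    unfolding second_neighbours_def using simple_graph_edge_in_V[OF sg] by blast
next
  have no_triangle: "\<not> E c a" if "E a b" "E b c" for a b c
    using girth_at_least_4_no_triangle[OF sg girth_at_least_mono[OF girth] that] by simp
  note sym = simple_graph_sym[OF sg]
  fix x y assume "x \<in> second_neighbours E u" "y \<in> second_neighbours E u"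
  then obtain w w' where x: "x \<noteq> u" "E u w" "E w x" and y: "y \<noteq> u" "E u w'" "E w' y"
    unfolding second_neighbours_def by blast
  show "\<not> E x y"
  proof
    assume xy: "E x y"
    have "w \<noteq> w'" using no_triangle[OF \<open>E w x\<close> xy] sym[OF y(3)] by metis
    moreover have "w \<noteq> y" using no_triangle[OF \<open>E u w'\<close> \<open>E w' y\<close>] sym[OF x(2)] by metis
    moreover have "x \<noteq> w'" using no_triangle[OF \<open>E u w\<close> \<open>E w x\<close>] sym[OF y(2)] by metis
    ultimately show False
      using girth_at_least_6_no_pentagon[OF sg girth x(2,3) xy sym[OF y(3)]] x(1) y(1) sym[OF y(2)]
      by metis
  qed
qed

lemma finite_indep_sets: "finite V \<Longrightarrow> finite {S. indep_set V E S}"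
  by (rule finite_subset[of _ "Pow V"]) (auto simp: indep_set_def)

lemma exists_maximal_indep_superset:
  assumes "finite V" "indep_set V E I"
  shows "\<exists>M. maximal_indep_set V E M \<and> I \<subseteq> M"
proof -
  obtain M where "M \<in> {S. indep_set V E S}" "I \<subseteq> M"
    and "\<forall>T \<in> {S. indep_set V E S}. M \<subseteq> T \<longrightarrow> M = T"
    using finite_has_maximal2[OF finite_indep_sets[OF assms(1)]] assms(2) by blast
  then show ?thesis unfolding maximal_indep_set_def by auto
qed

lemma card_le_alpha: "finite V \<Longrightarrow> indep_set V E S \<Longrightarrow> card S \<le> alpha V E"
  unfolding alpha_def by (rule Max_ge) (auto intro: finite_indep_sets)

lemma indep_domination_number_le_card:
  assumes "finite V" "maximal_indep_set V E M"
  shows "indep_domination_number V E \<le> card M"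
proof -
  have "finite {S. maximal_indep_set V E S}"
    using finite_indep_sets[OF assms(1)] by (rule finite_subset[rotated]) (auto simp: maximal_indep_set_def)
  with assms(2) show ?thesis unfolding indep_domination_number_def by (auto intro: Min_le)
qed

lemma exists_maximal_indep_meeting_nbhd_in:
  assumes sg: "simple_graph V E" and girth: "girth_at_least V E 6" and "E u v"
    and other_nb: "\<And>w. E u w \<Longrightarrow> w \<noteq> v \<Longrightarrow> \<exists>x. E w x \<and> x \<noteq> u"
  shows "\<exists>M. maximal_indep_set V E M \<and> v \<in> M \<and> (\<forall>w. E u w \<and> w \<in> M \<longrightarrow> w = v)"
proof -
  note sym = simple_graph_sym[OF sg]
  have girth5: "girth_at_least V E 5" using girth_at_least_mono[OF girth] by simp
  define I where "I = insert v (second_neighbours E u - {x. E v x})"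
  have "indep_set V E I"
    using second_neighbours_indep[OF sg girth, of u] simple_graph_edge_in_V[OF sg \<open>E u v\<close>]
      simple_graph_irrefl[OF sg, of v] sym
    unfolding I_def indep_set_def by blast
  then obtain M where M: "maximal_indep_set V E M" "I \<subseteq> M"
    using exists_maximal_indep_superset[OF simple_graph_finite[OF sg]] by blast
  have "w \<notin> M" if w: "E u w" "w \<noteq> v" for w
  proof -
    obtain x where x: "E w x" "x \<noteq> u" using other_nb[OF w] by blast
    have "\<not> E x v"
      using girth_at_least_5_no_square[OF sg girth5 \<open>E u w\<close> x(1) _ x(2)[symmetric] w(2)]
        sym[OF \<open>E u v\<close>] by blast
    then have "\<not> E v x" using sym by blast
    then have "x \<in> I"
      using x w(1) unfolding I_def second_neighbours_def by blast
    with M have "x \<in> M" by blast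
    with M(1) x(1) show "w \<notin> M" unfolding maximal_indep_set_def indep_set_def by blast
  qed
  with M show ?thesis unfolding I_def by blast
qed

lemma indep_set_exchange:
  assumes sg: "simple_graph V E" and M: "indep_set V E M" "v \<in> M"
    and edges: "E v u" "E v a" "E v b" and u_nbhd: "\<forall>w. E u w \<and> w \<in> M \<longrightarrow> w = v"
    and a_pendant: "\<And>x. E a x \<Longrightarrow> x = v" and b_pendant: "\<And>x. E b x \<Longrightarrow> x = v"
  shows "indep_set V E (insert a (insert b (insert u (M - {v}))))" (is "indep_set V E ?M'")
  unfolding indep_set_def
proof (intro conjI ballI)
  note sym = simple_graph_sym[OF sg] and irrefl = simple_graph_irrefl[OF sg]
  show "?M' \<subseteq> V" using M(1) edges simple_graph_edge_in_V[OF sg] unfolding indep_set_def by blast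
  have "v \<notin> ?M'" using edges irrefl by auto
  then have new_nbhd: "y \<notin> ?M'" if "E x y" "x \<in> {a, b, u}" for x y
    using that u_nbhd a_pendant b_pendant edges irrefl sym by blast
  fix x y assume "x \<in> ?M'" "y \<in> ?M'"
  then consider "x \<in> {a, b, u}" | "y \<in> {a, b, u}" | "x \<in> M" "y \<in> M" by blast
  then show "\<not> E x y"
    using new_nbhd M(1) sym \<open>x \<in> ?M'\<close> \<open>y \<in> ?M'\<close> unfolding indep_set_def by cases blast+
qed

lemma indep_domination_number_add_two_le_alpha:
  assumes sg: "simple_graph V E" and girth: "girth_at_least V E 6"
    and edges: "E v u" "E v a" "E v b" and "distinct [a, b, u]"
    and a_pendant: "\<And>x. E a x \<Longrightarrow> x = v" and b_pendant: "\<And>x. E b x \<Longrightarrow> x = v"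
    and other_nb: "\<And>w. E u w \<Longrightarrow> w \<noteq> v \<Longrightarrow> \<exists>x. E w x \<and> x \<noteq> u"
  shows "indep_domination_number V E + 2 \<le> alpha V E"
proof -
  note fin = simple_graph_finite[OF sg]
  obtain M where M: "maximal_indep_set V E M" "v \<in> M" "\<forall>w. E u w \<and> w \<in> M \<longrightarrow> w = v"
    using exists_maximal_indep_meeting_nbhd_in[OF sg girth simple_graph_sym[OF sg edges(1)] other_nb]
    by blast
  have indep: "indep_set V E M" using M(1) unfolding maximal_indep_set_def by blast
  have "a \<notin> M" "b \<notin> M" "u \<notin> M"
    using indep M(2) edges unfolding indep_set_def by blast+
  moreover have "finite M" using indep fin unfolding indep_set_def by (blast intro: finite_subset)
  moreover have "card M > 0" using \<open>finite M\<close> M(2) card_gt_0_iff by blast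
  ultimately have "card (insert a (insert b (insert u (M - {v})))) = card M + 2"
    using M(2) \<open>distinct [a, b, u]\<close> by simp
  moreover have "card (insert a (insert b (insert u (M - {v})))) \<le> alpha V E"
    using card_le_alpha[OF fin indep_set_exchange[OF sg indep M(2) edges M(3) a_pendant b_pendant]] .
  moreover have "indep_domination_number V E \<le> card M"
    using indep_domination_number_le_card[OF fin M(1)] .
  ultimately show ?thesis by linarith
qed

lemma Uset_edge_iff:
  assumes sg: "simple_graph V E" and "E x y"
  shows "x \<in> Uset V E \<longleftrightarrow> y \<in> Uset V E"
proof -
  have "E\<^sup>*\<^sup>* x = E\<^sup>*\<^sup>* y"
    using \<open>E x y\<close> simple_graph_sym[OF sg \<open>E x y\<close>]
    by (auto intro!: ext intro: converse_rtranclp_into_rtranclp)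
  then have "component V E x = component V E y" unfolding component_def by simp
  then show ?thesis using simple_graph_edge_in_V[OF sg \<open>E x y\<close>] unfolding Uset_def by auto
qed

lemma deg_minus_U_eq_card_nbhd:
  assumes "simple_graph V E" "w \<notin> Uset V E"
  shows "deg_minus_U V E w = card {y. E w y}"
proof -
  have "{y \<in> V - Uset V E. E w y} = {y. E w y}"
    using assms Uset_edge_iff[OF assms(1)] simple_graph_edge_in_V[OF assms(1)] by blast
  then show ?thesis unfolding deg_minus_U_def by simp
qed

lemma leaf_neighbour_unique:
  assumes sg: "simple_graph V E" and "is_leaf V E l" "E l x" "E l y"
  shows "x = y"
proof -
  have "card {z. E l z} = 1"
    using assms(2) deg_minus_U_eq_card_nbhd[OF sg, of l] unfolding is_leaf_def by simp
  with assms(3,4) show ?thesis by (metis card_1_singletonE mem_Collect_eq singletonD)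
qed

lemma non_leaf_other_neighbour:
  assumes sg: "simple_graph V E" and "w \<notin> Uset V E" "\<not> is_leaf V E w" "E w u"
  shows "\<exists>x. E w x \<and> x \<noteq> u"
proof (rule ccontr)
  assume "\<not> ?thesis"
  with \<open>E w u\<close> have "{y. E w y} = {u}" by blast
  with assms show False
    using deg_minus_U_eq_card_nbhd[OF sg] simple_graph_edge_in_V[OF sg] unfolding is_leaf_def by auto
qed

theorem lemma13:
  fixes V :: "'a set" and E :: "'a \<Rightarrow> 'a \<Rightarrow> bool"
  assumes "simple_graph V E"
    and "almost_well_covered V E"
    and "girth_at_least V E 6"
    and "has_type V E 2 v"
    and "has_type V E 0 u"
  shows "\<not> E v u"
proof
  assume "E v u"
  note sg = assms(1)
  have "v \<notin> Uset V E" and "card {x. is_leaf V E x \<and> E v x} = 2"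
    using assms(4) unfolding has_type_def is_internal_def by auto
  then obtain a b where "a \<noteq> b" and a: "is_leaf V E a" "E v a" and b: "is_leaf V E b" "E v b"
    unfolding card_2_iff by blast
  have "u \<notin> Uset V E" using \<open>v \<notin> Uset V E\<close> Uset_edge_iff[OF sg \<open>E v u\<close>] by blast
  then have "is_internal V E u" and "card {x. is_leaf V E x \<and> E u x} = 0"
    using assms(5) unfolding has_type_def by auto
  moreover have "finite {x. is_leaf V E x \<and> E u x}"
    using simple_graph_finite[OF sg] simple_graph_edge_in_V[OF sg] by (auto intro: finite_subset)
  ultimately have no_leaf_nb: "\<not> is_leaf V E w" if "E u w" for w
    using that by auto
  have "distinct [a, b, u]"
    using \<open>a \<noteq> b\<close> a(1) b(1) \<open>is_internal V E u\<close> unfolding is_leaf_def is_internal_def by auto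
  moreover have "\<exists>x. E w x \<and> x \<noteq> u" if "E u w" for w
    using non_leaf_other_neighbour[OF sg _ no_leaf_nb[OF that] simple_graph_sym[OF sg that]]
      \<open>u \<notin> Uset V E\<close> Uset_edge_iff[OF sg that] by blast
  ultimately have "indep_domination_number V E + 2 \<le> alpha V E"
    using indep_domination_number_add_two_le_alpha[OF sg assms(3) \<open>E v u\<close> a(2) b(2)]
      leaf_neighbour_unique[OF sg a(1) simple_graph_sym[OF sg a(2)]]
      leaf_neighbour_unique[OF sg b(1) simple_graph_sym[OF sg b(2)]]
    by blast
  with assms(2) show False unfolding almost_well_covered_def by linarith
qed

end
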